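(* Let $\mathcal{X}=\mathbb{N}$, $\mathcal{Y}=\{0,1\}\times\{0,1\}^*$, and for $d\in\mathbb{N}$ and $A,B\in\{0,1\}^d$ let $h_{A,B}(x)=(0,A)$ if $(A\oplus B)(x\bmod d)=0$ and $h_{A,B}(x)=(1,B)$ if $(A\oplus B)(x\bmod d)=1$. Let $\mathcal{H}_{\mathrm{OTP}}=\{h_{A,B}: A,B\in\{0,1\}^*, |A|=|B|, A\oplus B\text{ balanced}\}$. Then every $h\in\mathcal{H}_{\mathrm{OTP}}$ satisfies $|\mathrm{im}(h)|\le 2$, and the map $h\mapsto\mathrm{im}(h)$ is injective on $\mathcal{H}_{\mathrm{OTP}}$.
   Context: $\{0,1\}^*$ denotes finite binary strings; $\oplus$ is entrywise XOR; positions of a length-$d$ string are indexed by residues modulo $d$; a string is balanced if it has equally many 0s and 1s. $\mathrm{im}(h)=\{h(x):x\in\mathcal{X}\}$. *)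

theory Defs
  imports Main
begin

text \<open>Binary strings are modelled as bool lists (False = 0, True = 1).\<close>

definition xor_str :: "bool list \<Rightarrow> bool list \<Rightarrow> bool list" where
  "xor_str A B = map2 (\<noteq>) A B"

definition balanced :: "bool list \<Rightarrow> bool" where
  "balanced s \<longleftrightarrow> length (filter (\<lambda>b. b) s) = length (filter (\<lambda>b. \<not> b) s)"

definition h_AB :: "bool list \<Rightarrow> bool list \<Rightarrow> nat \<Rightarrow> bool \<times> bool list" where
  "h_AB A B x = (if xor_str A B ! (x mod length A) then (True, B) else (False, A))"

definition H_OTP :: "(nat \<Rightarrow> bool \<times> bool list) set" where
  "H_OTP = {h_AB A B | A B. length A = length B \<and> balanced (xor_str A B)}"

end

theory Submission
  imports Defs
begin

text \<open>Since the XOR string is balanced and, for nonempty A, every position is hit by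
  x mod length A, the bit (A xor B)(x mod d) takes both values, so h_{A,B} has exactly the
  two values (1, B) and (0, A), which in turn determine A and B. The degenerate member
  h_{[],[]} takes values among (0, []) and (1, []) only, and is the only member whose
  values have length 0.\<close>

lemma length_xor_str: "length (xor_str A B) = min (length A) (length B)"
  by (simp add: xor_str_def)

lemma balanced_set_eq:
  assumes "balanced s" "s \<noteq> []"
  shows "set s = {True, False}"
proof -
  have "length (filter (\<lambda>b. b) s) + length (filter (\<lambda>b. \<not> b) s) = length s"
    by (rule sum_length_filter_compl)
  with assms have "filter (\<lambda>b. b) s \<noteq> []" "filter (\<lambda>b. \<not> b) s \<noteq> []"
    unfolding balanced_def by auto
  then have "True \<in> set s" "False \<in> set s"
    by (auto simp: filter_empty_conv)
  then show ?thesis by auto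
qed

lemma range_nth_mod_length:
  assumes "s \<noteq> []"
  shows "range (\<lambda>x. s ! (x mod length s)) = set s"
proof
  show "range (\<lambda>x. s ! (x mod length s)) \<subseteq> set s"
    using assms by auto
  show "set s \<subseteq> range (\<lambda>x. s ! (x mod length s))"
  proof
    fix b assume "b \<in> set s"
    then obtain i where "i < length s" "b = s ! i"
      by (auto simp: in_set_conv_nth)
    then show "b \<in> range (\<lambda>x. s ! (x mod length s))"
      by (metis mod_less rangeI)
  qed
qed

lemma range_h_AB_subset: "range (h_AB A B) \<subseteq> {(True, B), (False, A)}"
  by (auto simp: h_AB_def)

lemma range_h_AB:
  assumes "length A = length B" "balanced (xor_str A B)" "A \<noteq> []"
  shows "range (h_AB A B) = {(True, B), (False, A)}"
proof -
  let ?s = "xor_str A B"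
  have len: "length ?s = length A"
    using assms(1) by (simp add: length_xor_str)
  then have "?s \<noteq> []" using assms(3) by auto
  then have "range (\<lambda>x. ?s ! (x mod length A)) = {True, False}"
    using range_nth_mod_length balanced_set_eq assms(2) len by metis
  moreover have "h_AB A B = (\<lambda>b. if b then (True, B) else (False, A)) \<circ> (\<lambda>x. ?s ! (x mod length A))"
    by (auto simp: h_AB_def)
  ultimately show ?thesis
    by auto
qed

lemma length_snd_h_AB: "length A = length B \<Longrightarrow> length (snd (h_AB A B x)) = length A"
  by (simp add: h_AB_def)

lemma H_OTP_E:
  assumes "h \<in> H_OTP"
  obtains A B where "h = h_AB A B" "length A = length B" "balanced (xor_str A B)"
  using assms unfolding H_OTP_def by blast

lemma card_range_H_OTP:
  assumes "h \<in> H_OTP"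
  shows "finite (range h) \<and> card (range h) \<le> 2"
proof -
  obtain A B where "h = h_AB A B"
    using assms by (rule H_OTP_E)
  then have "range h \<subseteq> {(True, B), (False, A)}"
    using range_h_AB_subset by simp
  moreover have "card {(True, B), (False, A)} \<le> 2"
    by (simp add: card_insert_le_m1)
  ultimately show ?thesis
    by (meson card_mono finite.emptyI finite.insertI finite_subset order_trans)
qed

lemma inj_on_range_H_OTP: "inj_on range H_OTP"
proof (rule inj_onI)
  fix h h' assume "h \<in> H_OTP" "h' \<in> H_OTP" and eq: "range h = range h'"
  obtain A B where h: "h = h_AB A B" "length A = length B" "balanced (xor_str A B)"
    using \<open>h \<in> H_OTP\<close> by (rule H_OTP_E)
  obtain A' B' where h': "h' = h_AB A' B'" "length A' = length B'" "balanced (xor_str A' B')"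
    using \<open>h' \<in> H_OTP\<close> by (rule H_OTP_E)
  obtain x where "h 0 = h' x"
    using eq by (metis rangeE rangeI)
  then have len: "length A = length A'"
    using length_snd_h_AB h(1,2) h'(1,2) by metis
  show "h = h'"
  proof (cases "A = []")
    case True
    then show ?thesis using h h' len by simp
  next
    case False
    with len have "A' \<noteq> []" by auto
    then have "{(True, B), (False, A)} = {(True, B'), (False, A')}"
      using eq range_h_AB[OF h(2,3) False] range_h_AB[OF h'(2,3)] h(1) h'(1) by simp
    then show ?thesis
      using h(1) h'(1) by (auto simp: doubleton_eq_iff)
  qed
qed

theorem lemma1:
  shows "(\<forall>h\<in>H_OTP. finite (range h) \<and> card (range h) \<le> 2) \<and> inj_on (\<lambda>h. range h) H_OTP"
  using card_range_H_OTP inj_on_range_H_OTP by blast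

end
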